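(* Let $\mathcal{M}$ be an RKHS of functions of $(a,w,x)$ with kernel $K_{\mathcal{M}}$ and $\mathcal{G}$ an RKHS of functions of $(a,z,x)$ with kernel $K_{\mathcal{G}}$, each with its canonical RKHS norm, and let $\lambda_m,\gamma_m,\lambda_g,\gamma_g>0$. Given data $\{(a_i,z_i,w_i,x_i,y_i)\}_{i=1}^n$, define $\Phi^n_q(q,m;p)=\frac1n\sum_i\big(q(a_i,z_i,x_i)-\frac1{p(a_i\mid w_i,x_i)}\big)m(a_i,w_i,x_i)$ and $\Phi^n_h(h,g)=\frac1n\sum_i(y_i-h(a_i,w_i,x_i))g(a_i,z_i,x_i)$, and let $K_{\mathcal{M},n}=(K_{\mathcal{M}}((a_i,w_i,x_i),(a_j,w_j,x_j)))_{i,j=1}^n$, $K_{\mathcal{G},n}=(K_{\mathcal{G}}((a_i,z_i,x_i),(a_j,z_j,x_j)))_{i,j=1}^n$, $\psi_{q,n}=\big(\frac1n(q(a_i,z_i,x_i)-\frac1{p(a_i\mid w_i,x_i)})\big)_{i=1}^n$, $\psi_{h,n}=\big(\frac1n(y_i-h(a_i,w_i,x_i))\big)_{i=1}^n$. Then for any $q,h$, $$\max_{m\in\mathcal{M}}\Phi^n_q-\lambda_m\|m\|_{2,n}^2-\gamma_m\|m\|_{\mathcal{M}}^2=\frac1{4\gamma_m}\psi_{q,n}^\top K_{\mathcal{M},n}\Big(\frac{\lambda_m}{\gamma_m}\frac1nK_{\mathcal{M},n}+I\Big)^{-1}\psi_{q,n}=\frac1{4\gamma_m}\psi_{q,n}^\top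 K_{\mathcal{M},n}^{1/2}\Big(\frac{\lambda_m}{\gamma_m}\frac1nK_{\mathcal{M},n}+I\Big)^{-1}K_{\mathcal{M},n}^{1/2}\psi_{q,n},$$ $$\max_{g\in\mathcal{G}}\Phi^n_h-\lambda_g\|g\|_{2,n}^2-\gamma_g\|g\|_{\mathcal{G}}^2=\frac1{4\gamma_g}\psi_{h,n}^\top K_{\mathcal{G},n}\Big(\frac{\lambda_g}{\gamma_g}\frac1nK_{\mathcal{G},n}+I\Big)^{-1}\psi_{h,n}=\frac1{4\gamma_g}\psi_{h,n}^\top K_{\mathcal{G},n}^{1/2}\Big(\frac{\lambda_g}{\gamma_g}\frac1nK_{\mathcal{G},n}+I\Big)^{-1}K_{\mathcal{G},n}^{1/2}\psi_{h,n}.$$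
   Context: $\|m\|_{2,n}^2=\frac1n\sum_i m^2(a_i,w_i,x_i)$ and $\|g\|_{2,n}^2=\frac1n\sum_i g^2(a_i,z_i,x_i)$; $p(a\mid w,x)$ is a (given) conditional density of $A$ given $(W,X)$; $I$ is the $n\times n$ identity matrix. *)

theory Defs
  imports "HOL-Analysis.Analysis"
begin

text \<open>The Hilbert space is a type 'h (real inner product space, complete); ev identifies its
  elements with functions 'x \<Rightarrow> real (injectively). The canonical RKHS norm is norm on 'h.\<close>
definition rkhs :: "('h::{real_inner,complete_space} \<Rightarrow> 'x \<Rightarrow> real) \<Rightarrow> ('x \<Rightarrow> 'x \<Rightarrow> real) \<Rightarrow> bool" where
  "rkhs ev K \<longleftrightarrow> inj ev \<and>
     (\<forall>y. \<exists>k. ev k = (\<lambda>x. K x y) \<and> (\<forall>f. ev f y = inner f k))"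

definition is_max_value :: "('h \<Rightarrow> real) \<Rightarrow> real \<Rightarrow> bool" where
  "is_max_value F V \<longleftrightarrow> (\<exists>f. F f = V) \<and> (\<forall>f. F f \<le> V)"

definition psd_matrix :: "real^'n^'n \<Rightarrow> bool" where
  "psd_matrix S \<longleftrightarrow> transpose S = S \<and> (\<forall>v. 0 \<le> v \<bullet> (S *v v))"

definition matrix_sqrt :: "real^'n^'n \<Rightarrow> real^'n^'n" where
  "matrix_sqrt K = (THE S. psd_matrix S \<and> S ** S = K)"

end

theory Submission
  imports Defs
begin

text \<open>By the reproducing property, \<open>f\<close> enters the objective only through its inner products
  \<open>\<langle>f, k\<^sub>i\<rangle>\<close> with the kernel sections \<open>k\<^sub>i\<close> at the data points and through \<open>\<parallel>f\<parallel>\<close>.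
  For \<open>\<alpha>\<close> solving \<open>(\<lambda>/(\<gamma> n) K + I) \<alpha> = \<psi>/(2\<gamma>)\<close>, completing the square around
  \<open>g = \<Sum> \<alpha>\<^sub>i k\<^sub>i\<close> shows that the objective at \<open>g + d\<close> is its value at \<open>g\<close> minus
  \<open>\<lambda>/n \<Sum> \<langle>d, k\<^sub>i\<rangle>\<^sup>2 + \<gamma> \<parallel>d\<parallel>\<^sup>2\<close>; so \<open>g\<close> is a maximiser, with value \<open>\<psi>\<^sup>T K R \<psi> / (4\<gamma>)\<close>.
  The square-root form holds because the positive semidefinite square root of \<open>K\<close>, obtained
  from the spectral theorem, commutes with \<open>K\<close> and hence with \<open>R\<close>.\<close>

section \<open>Symmetric and positive semidefinite matrices\<close>

lemma inner_symmetric_matrix_vector: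
  fixes A :: "real^'n^'n"
  assumes "transpose A = A"
  shows "x \<bullet> (A *v y) = (A *v x) \<bullet> y"
  by (metis assms dot_lmul_matrix transpose_matrix_vector)

lemma le_all_pos_mult_imp_nonpos:
  fixes a b :: real
  assumes "\<And>t. t > 0 \<Longrightarrow> a \<le> t * b"
  shows "a \<le> 0"
proof (rule tendsto_lowerbound)
  show "((\<lambda>t. t * b) \<longlongrightarrow> 0) (at_right 0)"
    by (auto intro!: tendsto_eq_intros)
  show "\<forall>\<^sub>F t in at_right 0. a \<le> t * b"
    using assms by (auto simp: eventually_at_right_field intro: exI[of _ 1])
qed simp

lemma quadratic_form_zero_imp_kernel:
  fixes S :: "real^'n^'n"
  assumes sym: "transpose S = S" and U: "subspace U" and inv: "\<And>x. x \<in> U \<Longrightarrow> S *v x \<in> U"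
    and nonneg: "\<And>x. x \<in> U \<Longrightarrow> 0 \<le> x \<bullet> (S *v x)"
    and v: "v \<in> U" and zero: "v \<bullet> (S *v v) = 0"
  shows "S *v v = 0"
proof -
  define w where "w = S *v v"
  have vSw: "v \<bullet> (S *v w) = w \<bullet> w"
    using inner_symmetric_matrix_vector[OF sym, of v w] unfolding w_def by simp
  have "2 * (w \<bullet> w) \<le> t * (w \<bullet> (S *v w))" if t: "t > 0" for t
  proof -
    have "v - t *\<^sub>R w \<in> U" using U v inv unfolding w_def by (simp add: subspace_diff subspace_scale)
    then have "0 \<le> (v - t *\<^sub>R w) \<bullet> (S *v (v - t *\<^sub>R w))" by (rule nonneg)
    also have "\<dots> = t * (t * (w \<bullet> (S *v w)) - 2 * (w \<bullet> w))"
      using vSw zero unfolding w_def[symmetric]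
      by (simp add: matrix_vector_mult_diff_distrib matrix_vector_mult_scaleR inner_diff_left
          inner_diff_right inner_commute[of w v] w_def algebra_simps)
    finally show ?thesis using t by (simp add: zero_le_mult_iff)
  qed
  then have "2 * (w \<bullet> w) \<le> 0" by (rule le_all_pos_mult_imp_nonpos)
  then have "w \<bullet> w = 0" using inner_ge_zero[of w] by linarith
  then show ?thesis unfolding w_def[symmetric] by simp
qed

lemma psd_matrix_quadratic_form_zero:
  fixes S :: "real^'n^'n"
  assumes "psd_matrix S" and "v \<bullet> (S *v v) = 0"
  shows "S *v v = 0"
  using assms by (intro quadratic_form_zero_imp_kernel[of S UNIV]) (auto simp: psd_matrix_def)

text \<open>The maximiser of the Rayleigh quotient \<open>u \<bullet> (A *v u)\<close> on the unit sphere of \<open>U\<close> is an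
  eigenvector, because \<open>\<mu> *\<^sub>R mat 1 - A\<close> is then positive semidefinite on \<open>U\<close>
  with a zero of its quadratic form at \<open>u\<close>.\<close>
lemma symmetric_matrix_invariant_subspace_eigenvector:
  fixes A :: "real^'n^'n"
  assumes sym: "transpose A = A" and U: "subspace U" and inv: "\<And>x. x \<in> U \<Longrightarrow> A *v x \<in> U"
    and nontriv: "U \<noteq> {0}"
  obtains u \<mu> where "u \<in> U" "norm u = 1" "A *v u = \<mu> *\<^sub>R u"
proof -
  define S where "S = U \<inter> sphere 0 1"
  have "compact S" unfolding S_def
    using closed_subspace[OF U] by (simp add: closed_Int_compact)
  moreover obtain x where x: "x \<in> U" "x \<noteq> 0" using nontriv U subspace_0 by blast
  then have "(1 / norm x) *\<^sub>R x \<in> S" unfolding S_def using U by (simp add: subspace_scale)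
  then have "S \<noteq> {}" by blast
  moreover have "continuous_on S (\<lambda>v. v \<bullet> (A *v v))"
    by (intro continuous_intros matrix_vector_mult_linear_continuous_on)
  ultimately obtain u where "u \<in> S" and umax: "\<And>y. y \<in> S \<Longrightarrow> y \<bullet> (A *v y) \<le> u \<bullet> (A *v u)"
    using continuous_attains_sup by metis
  then have u: "u \<in> U" "norm u = 1" unfolding S_def by auto
  define \<mu> where "\<mu> = u \<bullet> (A *v u)"
  define B where "B = \<mu> *\<^sub>R mat 1 - A"
  have Bv: "B *v v = \<mu> *\<^sub>R v - A *v v" for v
    unfolding B_def by (simp add: matrix_vector_mult_diff_rdistrib scaleR_matrix_vector_assoc[symmetric])
  have "0 \<le> v \<bullet> (B *v v)" if v: "v \<in> U" for v
  proof (cases "v = 0")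
    case False
    have "(1 / norm v) *\<^sub>R v \<in> S" unfolding S_def using v U False by (simp add: subspace_scale)
    then have "((1 / norm v) *\<^sub>R v) \<bullet> (A *v ((1 / norm v) *\<^sub>R v)) \<le> \<mu>"
      using umax unfolding \<mu>_def by blast
    then have "(1 / norm v)\<^sup>2 * (v \<bullet> (A *v v)) \<le> \<mu>"
      by (simp add: matrix_vector_mult_scaleR power2_eq_square)
    then have "v \<bullet> (A *v v) \<le> \<mu> * (v \<bullet> v)"
      using False by (simp add: field_simps dot_square_norm)
    then show ?thesis by (simp add: Bv inner_diff_right)
  qed simp
  moreover have "transpose B = B" unfolding B_def using sym by (simp add: transpose_def vec_eq_iff mat_def)
  moreover have "u \<bullet> (B *v u) = 0"
    using u(2) by (simp add: Bv inner_diff_right \<mu>_def dot_square_norm)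
  moreover have "B *v x \<in> U" if "x \<in> U" for x
    using that inv U by (simp add: Bv subspace_diff subspace_scale)
  ultimately have "B *v u = 0" using quadratic_form_zero_imp_kernel U u(1) by blast
  then have "A *v u = \<mu> *\<^sub>R u" by (simp add: Bv)
  with u show thesis by (rule that)
qed

lemma symmetric_matrix_invariant_subspace_eigenbasis:
  fixes A :: "real^'n^'n"
  assumes sym: "transpose A = A" and "subspace U" and "\<And>x. x \<in> U \<Longrightarrow> A *v x \<in> U"
  shows "\<exists>B. B \<subseteq> U \<and> finite B \<and> span B = U \<and> pairwise orthogonal B \<and>
    (\<forall>b\<in>B. norm b = 1 \<and> (\<exists>\<mu>. A *v b = \<mu> *\<^sub>R b))"
  using assms(2,3)
proof (induction "dim U" arbitrary: U rule: less_induct)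
  case less
  show ?case
  proof (cases "U = {0}")
    case True
    then show ?thesis by (intro exI[of _ "{}"]) auto
  next
    case False
    obtain u \<mu> where u: "u \<in> U" "norm u = 1" "A *v u = \<mu> *\<^sub>R u"
      using symmetric_matrix_invariant_subspace_eigenvector[OF sym less.prems False] by blast
    have uu: "u \<bullet> u = 1" using u(2) by (simp add: dot_square_norm)
    define U' where "U' = U \<inter> {v. orthogonal u v}"
    have U': "subspace U'" unfolding U'_def
      using subspace_inter[OF less.prems(1) subspace_orthogonal_to_vector[of u]] by simp
    have inv': "A *v x \<in> U'" if x: "x \<in> U'" for x
    proof -
      have "u \<bullet> (A *v x) = (A *v u) \<bullet> x" by (rule inner_symmetric_matrix_vector[OF sym])
      also have "\<dots> = 0" using x u(3) unfolding U'_def orthogonal_def by simp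
      finally show ?thesis using x less.prems(2) unfolding U'_def orthogonal_def by auto
    qed
    have "u \<notin> U'" using uu unfolding U'_def orthogonal_def by auto
    then have "U' \<subset> U" using u(1) unfolding U'_def by auto
    then have "dim U' < dim U" using U' less.prems(1) by (metis dim_psubset span_eq_iff)
    then obtain B' where B': "B' \<subseteq> U'" "finite B'" "span B' = U'" "pairwise orthogonal B'"
      "\<forall>b\<in>B'. norm b = 1 \<and> (\<exists>\<mu>. A *v b = \<mu> *\<^sub>R b)"
      using less.hyps[OF _ U' inv'] by blast
    have "U \<subseteq> span (insert u B')"
    proof
      fix v assume v: "v \<in> U"
      have "v - (u \<bullet> v) *\<^sub>R u \<in> U'" unfolding U'_def orthogonal_def
        using v u(1) less.prems(1) uu by (auto simp: subspace_diff subspace_scale inner_diff_right)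
      then show "v \<in> span (insert u B')" unfolding span_breakdown_eq B'(3) by blast
    qed
    moreover have "span (insert u B') \<subseteq> U"
      using u(1) B'(1) less.prems(1) unfolding U'_def by (intro span_minimal) auto
    moreover have "pairwise orthogonal (insert u B')"
      using B'(1,4) \<open>u \<notin> U'\<close> unfolding U'_def
      by (auto simp: pairwise_insert orthogonal_commute)
    ultimately show ?thesis using u B' unfolding U'_def
      by (intro exI[of _ "insert u B'"]) auto
  qed
qed

lemma symmetric_matrix_orthonormal_eigenbasis:
  fixes A :: "real^'n^'n"
  assumes "transpose A = A"
  obtains B where "finite B" "span B = UNIV" "pairwise orthogonal B"
    "\<And>b. b \<in> B \<Longrightarrow> norm b = 1" "\<And>b. b \<in> B \<Longrightarrow> \<exists>\<mu>. A *v b = \<mu> *\<^sub>R b"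
  using symmetric_matrix_invariant_subspace_eigenbasis[OF assms, of UNIV] by auto

lemma matrix_eq_on_spanning_set:
  fixes A B :: "real^'n^'n"
  assumes "span V = UNIV" and "\<And>v. v \<in> V \<Longrightarrow> A *v v = B *v v"
  shows "A = B"
  using linear_eq_on_span[OF matrix_vector_mul_linear matrix_vector_mul_linear, of V]
  by (metis assms UNIV_I matrix_eq)

lemma sum_outer_products_mult:
  fixes B :: "(real^'n) set"
  shows "(\<chi> i j. \<Sum>b\<in>B. f b * b $ i * b $ j) *v v = (\<Sum>b\<in>B. (f b * (b \<bullet> v)) *\<^sub>R b)"
  by (simp add: vec_eq_iff matrix_vector_mult_def sum_component inner_vec_def
      sum_distrib_left sum_distrib_right mult_ac sum.swap[of _ UNIV])

lemma orthonormal_inner: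
  assumes "pairwise orthogonal B" "\<And>b. b \<in> B \<Longrightarrow> norm b = 1" "b \<in> B" "c \<in> B"
  shows "b \<bullet> c = (if b = c then 1 else 0)"
  using assms by (force simp: norm_eq_1 orthogonal_def pairwise_def)

lemma psd_matrix_sqrt_exists:
  fixes K :: "real^'n^'n"
  assumes psd: "psd_matrix K"
  shows "\<exists>S. psd_matrix S \<and> S ** S = K"
proof -
  obtain B where B: "finite B" "span B = UNIV" "pairwise orthogonal B" "\<And>b. b \<in> B \<Longrightarrow> norm b = 1"
    and eig: "\<And>b. b \<in> B \<Longrightarrow> \<exists>\<mu>. K *v b = \<mu> *\<^sub>R b"
    using symmetric_matrix_orthonormal_eigenbasis psd unfolding psd_matrix_def by metis
  define \<mu> where "\<mu> b = b \<bullet> (K *v b)" for b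
  have \<mu>_nonneg: "\<mu> b \<ge> 0" for b using psd unfolding \<mu>_def psd_matrix_def by blast
  have Kb: "K *v b = \<mu> b *\<^sub>R b" if "b \<in> B" for b
    using eig[OF that] B(4)[OF that] by (auto simp: \<mu>_def dot_square_norm)
  define S :: "real^'n^'n" where "S = (\<chi> i j. \<Sum>b\<in>B. sqrt (\<mu> b) * b $ i * b $ j)"
  have Sv: "S *v v = (\<Sum>b\<in>B. (sqrt (\<mu> b) * (b \<bullet> v)) *\<^sub>R b)" for v
    unfolding S_def by (rule sum_outer_products_mult)
  have Sb: "S *v b = sqrt (\<mu> b) *\<^sub>R b" if b: "b \<in> B" for b
  proof -
    have "S *v b = (\<Sum>c\<in>B. if c = b then sqrt (\<mu> c) *\<^sub>R c else 0)"
      unfolding Sv using b by (intro sum.cong) (auto simp: orthonormal_inner[OF B(3,4)])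
    then show ?thesis using B(1) b by simp
  qed
  have "transpose S = S" unfolding S_def transpose_def by (simp add: vec_eq_iff mult_ac)
  moreover have "0 \<le> v \<bullet> (S *v v)" for v
  proof -
    have "v \<bullet> (S *v v) = (\<Sum>b\<in>B. sqrt (\<mu> b) * (b \<bullet> v)\<^sup>2)"
      by (simp add: Sv inner_sum_right inner_commute[of v] power2_eq_square mult.assoc)
    then show ?thesis using \<mu>_nonneg by (simp add: sum_nonneg)
  qed
  moreover have "S ** S = K"
    using B(2) by (rule matrix_eq_on_spanning_set)
      (simp add: matrix_vector_mul_assoc[symmetric] Sb Kb matrix_vector_mult_scaleR \<mu>_nonneg)
  ultimately show ?thesis unfolding psd_matrix_def by blast
qed

lemma psd_matrix_sqrt_unique:
  fixes S T :: "real^'n^'n"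
  assumes S: "psd_matrix S" and T: "psd_matrix T" and eq: "S ** S = T ** T"
  shows "S = T"
proof -
  define D where "D = S - T"
  have Dv: "D *v x = S *v x - T *v x" for x
    unfolding D_def by (simp add: matrix_vector_mult_diff_rdistrib)
  have symD: "transpose D = D"
    using S T unfolding D_def psd_matrix_def by (simp add: transpose_def vec_eq_iff)
  obtain B where B: "span B = UNIV" and eig: "\<And>b. b \<in> B \<Longrightarrow> \<exists>m. D *v b = m *\<^sub>R b"
    using symmetric_matrix_orthonormal_eigenbasis[OF symD] by metis
  have "D *v b = 0" if b: "b \<in> B" for b
  proof -
    obtain m where m: "D *v b = m *\<^sub>R b" using eig[OF b] by blast
    \<comment> \<open>\<open>S D + D T = S S - T T = 0\<close>, tested against the eigenvector \<open>b\<close> of \<open>D\<close>\<close>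
    have "S *v (D *v b) + D *v (T *v b) = S *v (S *v b) - T *v (T *v b)"
      unfolding Dv by (simp add: matrix_vector_mult_diff_distrib)
    also have "\<dots> = 0" using eq by (simp add: matrix_vector_mul_assoc)
    finally have "b \<bullet> (S *v (D *v b)) + (D *v b) \<bullet> (T *v b) = 0"
      by (metis inner_add_right inner_zero_right inner_symmetric_matrix_vector[OF symD])
    then have "m * (b \<bullet> (S *v b) + b \<bullet> (T *v b)) = 0"
      by (simp add: m matrix_vector_mult_scaleR distrib_left)
    moreover have "0 \<le> b \<bullet> (S *v b)" "0 \<le> b \<bullet> (T *v b)"
      using S T unfolding psd_matrix_def by blast+
    ultimately consider "m = 0" | "b \<bullet> (S *v b) = 0" "b \<bullet> (T *v b) = 0" by fastforce
    then show ?thesis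
    proof cases
      case 2
      then have "S *v b = 0" "T *v b = 0" using psd_matrix_quadratic_form_zero S T by blast+
      then show ?thesis by (simp add: Dv)
    qed (simp add: m)
  qed
  then have "D = 0" using B by (intro matrix_eq_on_spanning_set) auto
  then show ?thesis unfolding D_def by simp
qed

lemma matrix_sqrt_square:
  fixes K :: "real^'n^'n"
  assumes "psd_matrix K"
  shows "matrix_sqrt K ** matrix_sqrt K = K"
proof -
  obtain S where S: "psd_matrix S" "S ** S = K" using psd_matrix_sqrt_exists[OF assms] by blast
  have "matrix_sqrt K = S"
    unfolding matrix_sqrt_def using S psd_matrix_sqrt_unique by (intro the_equality) auto
  then show ?thesis using S(2) by simp
qed

section \<open>Inverses of regularised matrices\<close>

lemma matrix_inv:
  fixes M :: "real^'n^'n"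
  assumes "invertible M"
  shows "M ** matrix_inv M = mat 1" and "matrix_inv M ** M = mat 1"
  using someI_ex[OF assms[unfolded invertible_def]] unfolding matrix_inv_def by auto

lemma invertible_psd_scaled_plus_id:
  fixes K :: "real^'n^'n"
  assumes psd: "psd_matrix K" and c: "c \<ge> 0"
  shows "invertible (c *\<^sub>R K + mat 1)"
proof -
  let ?M = "c *\<^sub>R K + mat 1"
  have "z = 0" if "?M *v z = 0" for z
  proof -
    have "0 = z \<bullet> (?M *v z)" using that by simp
    also have "\<dots> = c * (z \<bullet> (K *v z)) + z \<bullet> z"
      by (simp add: matrix_vector_mult_add_rdistrib scaleR_matrix_vector_assoc[symmetric]
          matrix_vector_mult_scaleR inner_add_right)
    finally show ?thesis
      using psd c unfolding psd_matrix_def by (smt (verit) mult_nonneg_nonneg inner_ge_zero inner_eq_zero_iff)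
  qed
  then have "inj ((*v) ?M)"
    by (metis (no_types, lifting) injI eq_iff_diff_eq_0 matrix_vector_mult_diff_distrib)
  then show ?thesis using invertible_left_inverse matrix_left_invertible_injective by blast
qed

lemma commute_matrix_inv:
  fixes A M :: "real^'n^'n"
  assumes "invertible M" and "A ** M = M ** A"
  shows "A ** matrix_inv M = matrix_inv M ** A"
proof -
  let ?R = "matrix_inv M"
  have "A ** ?R = (?R ** M) ** A ** ?R" by (simp add: matrix_inv[OF assms(1)] matrix_mul_lid)
  also have "\<dots> = ?R ** (A ** M) ** ?R" using assms(2) by (simp add: matrix_mul_assoc)
  also have "\<dots> = ?R ** A ** (M ** ?R)" by (simp add: matrix_mul_assoc)
  also have "\<dots> = ?R ** A" by (simp add: matrix_inv[OF assms(1)] matrix_mul_rid)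
  finally show ?thesis .
qed

lemma commute_scaled_plus_id:
  fixes A K :: "real^'n^'n"
  assumes "A ** K = K ** A"
  shows "A ** (c *\<^sub>R K + mat 1) = (c *\<^sub>R K + mat 1) ** A"
proof -
  have "A *v (K *v v) = K *v (A *v v)" for v using assms by (simp add: matrix_vector_mul_assoc)
  then show ?thesis
    by (simp add: matrix_eq matrix_vector_mul_assoc[symmetric] matrix_vector_mult_add_rdistrib
        matrix_vector_right_distrib scaleR_matrix_vector_assoc[symmetric] matrix_vector_mult_scaleR)
qed

lemma matrix_sqrt_sandwich:
  fixes K :: "real^'n^'n"
  assumes psd: "psd_matrix K" and inv: "invertible (c *\<^sub>R K + mat 1)"
  shows "matrix_sqrt K ** matrix_inv (c *\<^sub>R K + mat 1) ** matrix_sqrt K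
       = K ** matrix_inv (c *\<^sub>R K + mat 1)"
proof -
  let ?S = "matrix_sqrt K" and ?R = "matrix_inv (c *\<^sub>R K + mat 1)"
  have SS: "?S ** ?S = K" by (rule matrix_sqrt_square[OF psd])
  then have "?S ** K = K ** ?S" by (metis matrix_mul_assoc)
  then have SR: "?S ** ?R = ?R ** ?S" by (intro commute_matrix_inv inv commute_scaled_plus_id)
  have KR: "K ** ?R = ?R ** K" by (intro commute_matrix_inv inv commute_scaled_plus_id refl)
  have "?S ** ?R ** ?S = ?R ** K" using SR SS by (metis matrix_mul_assoc)
  then show ?thesis using KR by simp
qed

section \<open>Penalised quadratic maximisation over an inner product space\<close>

definition gram_matrix :: "('n::finite \<Rightarrow> 'h::real_inner) \<Rightarrow> real^'n^'n" where
  "gram_matrix k = (\<chi> i j. inner (k i) (k j))"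

definition inner_samples :: "('n::finite \<Rightarrow> 'h::real_inner) \<Rightarrow> 'h \<Rightarrow> real^'n" where
  "inner_samples k f = (\<chi> i. inner f (k i))"

definition lin_comb :: "('n::finite \<Rightarrow> 'h::real_vector) \<Rightarrow> real^'n \<Rightarrow> 'h" where
  "lin_comb k \<alpha> = (\<Sum>i\<in>UNIV. \<alpha> $ i *\<^sub>R k i)"

lemma inner_lin_comb: "inner (lin_comb k \<alpha>) f = \<alpha> \<bullet> inner_samples k f"
  by (simp add: lin_comb_def inner_samples_def inner_sum_right inner_vec_def inner_commute[of _ f])

lemma inner_samples_add: "inner_samples k (f + g) = inner_samples k f + inner_samples k g"
  by (simp add: inner_samples_def vec_eq_iff inner_add_left)

lemma gram_matrix_mult: "gram_matrix k *v \<alpha> = inner_samples k (lin_comb k \<alpha>)"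
  by (simp add: vec_eq_iff gram_matrix_def inner_samples_def lin_comb_def matrix_vector_mult_def
      inner_sum_right inner_commute mult.commute)

lemma psd_gram_matrix: "psd_matrix (gram_matrix k)"
  unfolding psd_matrix_def
proof (intro conjI allI)
  show "transpose (gram_matrix k) = gram_matrix k"
    by (simp add: transpose_def gram_matrix_def vec_eq_iff inner_commute)
  show "0 \<le> v \<bullet> (gram_matrix k *v v)" for v
    by (metis inner_ge_zero inner_lin_comb gram_matrix_mult)
qed

lemma penalized_quadratic_max:
  fixes k :: "'n::finite \<Rightarrow> 'h::real_inner" and \<psi> :: "real^'n" and \<mu> \<gamma> :: real
  assumes \<mu>: "\<mu> \<ge> 0" and \<gamma>: "\<gamma> > 0"
  defines "R \<equiv> matrix_inv ((\<mu> / \<gamma>) *\<^sub>R gram_matrix k + mat 1)"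
  shows "is_max_value
           (\<lambda>f. \<psi> \<bullet> inner_samples k f - \<mu> * (norm (inner_samples k f))\<^sup>2 - \<gamma> * (norm f)\<^sup>2)
           (1 / (4 * \<gamma>) * (\<psi> \<bullet> ((gram_matrix k ** R) *v \<psi>)))"
proof -
  let ?K = "gram_matrix k"
  define F where "F f = \<psi> \<bullet> inner_samples k f - \<mu> * (norm (inner_samples k f))\<^sup>2 - \<gamma> * (norm f)\<^sup>2"
    for f
  have inv: "invertible ((\<mu> / \<gamma>) *\<^sub>R ?K + mat 1)"
    using \<mu> \<gamma> by (intro invertible_psd_scaled_plus_id psd_gram_matrix) simp
  define \<alpha> where "\<alpha> = (1 / (2 * \<gamma>)) *\<^sub>R (R *v \<psi>)"
  define g where "g = lin_comb k \<alpha>"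
  have Kg: "inner_samples k g = ?K *v \<alpha>" by (simp add: g_def gram_matrix_mult)
  have R\<psi>: "R *v \<psi> = (2 * \<gamma>) *\<^sub>R \<alpha>" unfolding \<alpha>_def using \<gamma> by simp
  have "((\<mu> / \<gamma>) *\<^sub>R ?K + mat 1) *v \<alpha> = (1 / (2 * \<gamma>)) *\<^sub>R \<psi>"
    unfolding \<alpha>_def R_def by (simp add: matrix_vector_mult_scaleR matrix_vector_mul_assoc matrix_inv(1)[OF inv])
  then have "(2 * \<gamma>) *\<^sub>R ((\<mu> / \<gamma>) *\<^sub>R (?K *v \<alpha>) + \<alpha>) = \<psi>"
    using \<gamma> by (simp add: matrix_vector_mult_add_rdistrib scaleR_matrix_vector_assoc[symmetric])
  \<comment> \<open>the first-order condition for a maximiser of the form \<open>lin_comb k \<alpha>\<close>\<close>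
  then have \<psi>: "\<psi> = (2 * \<mu>) *\<^sub>R (?K *v \<alpha>) + (2 * \<gamma>) *\<^sub>R \<alpha>"
    using \<gamma> by (simp add: scaleR_add_right)
  have expand: "F (g + d) = F g - (\<mu> * (norm (inner_samples k d))\<^sup>2 + \<gamma> * (norm d)\<^sup>2)" for d
  proof -
    have "inner g d = \<alpha> \<bullet> inner_samples k d" unfolding g_def by (rule inner_lin_comb)
    then show ?thesis
      unfolding F_def inner_samples_add Kg power2_norm_eq_inner \<psi>
      by (simp add: inner_add_left inner_add_right inner_commute algebra_simps)
  qed
  have "F f \<le> F g" for f
  proof -
    have "0 \<le> \<mu> * (norm (inner_samples k (f - g)))\<^sup>2 + \<gamma> * (norm (f - g))\<^sup>2"
      using \<mu> \<gamma> by (intro add_nonneg_nonneg mult_nonneg_nonneg) auto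
    then show ?thesis using expand[of "f - g"] by simp
  qed
  moreover have "F g = 1 / (4 * \<gamma>) * (\<psi> \<bullet> ((?K ** R) *v \<psi>))"
  proof -
    have "inner g g = \<alpha> \<bullet> (?K *v \<alpha>)" unfolding g_def by (simp add: inner_lin_comb Kg[unfolded g_def])
    moreover have "(?K ** R) *v \<psi> = (2 * \<gamma>) *\<^sub>R (?K *v \<alpha>)"
      by (simp add: matrix_vector_mul_assoc[symmetric] R\<psi> matrix_vector_mult_scaleR)
    ultimately show ?thesis
      unfolding F_def Kg power2_norm_eq_inner \<psi> using \<gamma>
      by (simp add: inner_add_left inner_commute algebra_simps)
  qed
  ultimately show ?thesis unfolding is_max_value_def F_def by metis
qed

section \<open>Penalised empirical maximisation in an RKHS\<close>

lemma rkhs_kernel_sections: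
  assumes "rkhs ev K"
  obtains k where "\<And>f x. ev f x = inner f (k x)" and "\<And>x y. K x y = inner (k x) (k y)"
proof -
  obtain k where k: "\<And>y. ev (k y) = (\<lambda>x. K x y)" "\<And>y f. ev f y = inner f (k y)"
    using assms unfolding rkhs_def by metis
  have "K x y = inner (k x) (k y)" for x y
    using fun_cong[OF k(1)[of y], of x] by (simp add: k(2) inner_commute)
  with k(2) show thesis by (rule that)
qed

lemma rkhs_penalized_empirical_max:
  fixes ev :: "'h::{real_inner,complete_space} \<Rightarrow> 'x \<Rightarrow> real" and K :: "'x \<Rightarrow> 'x \<Rightarrow> real"
    and pts :: "'n::finite \<Rightarrow> 'x" and c :: "'n \<Rightarrow> real" and lam gam :: real
  assumes rk: "rkhs ev K" and lam: "lam \<ge> 0" and gam: "gam > 0"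
  defines "n \<equiv> real CARD('n)"
  defines "Kn \<equiv> (\<chi> i j. K (pts i) (pts j)) :: real^'n^'n"
  defines "\<psi> \<equiv> (\<chi> i. (1/n) * c i) :: real^'n"
  defines "R \<equiv> matrix_inv ((lam / gam * (1/n)) *\<^sub>R Kn + mat 1)"
  shows "is_max_value (\<lambda>f. (1/n) * (\<Sum>i\<in>UNIV. c i * ev f (pts i))
              - lam * ((1/n) * (\<Sum>i\<in>UNIV. (ev f (pts i))\<^sup>2)) - gam * (norm f)\<^sup>2)
           (1 / (4 * gam) * (\<psi> \<bullet> ((Kn ** R) *v \<psi>)))
     \<and> 1 / (4 * gam) * (\<psi> \<bullet> ((Kn ** R) *v \<psi>))
         = 1 / (4 * gam) * (\<psi> \<bullet> ((matrix_sqrt Kn ** R ** matrix_sqrt Kn) *v \<psi>))"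
proof -
  obtain k where ev: "\<And>f x. ev f x = inner f (k x)" and K: "\<And>x y. K x y = inner (k x) (k y)"
    using rkhs_kernel_sections[OF rk] by blast
  let ?k = "\<lambda>i. k (pts i)"
  have Kn: "Kn = gram_matrix ?k" unfolding Kn_def gram_matrix_def K ..
  have R: "R = matrix_inv ((lam / n / gam) *\<^sub>R gram_matrix ?k + mat 1)"
    unfolding R_def Kn by (simp add: mult.commute)
  have objective: "(1/n) * (\<Sum>i\<in>UNIV. c i * ev f (pts i))
      - lam * ((1/n) * (\<Sum>i\<in>UNIV. (ev f (pts i))\<^sup>2)) - gam * (norm f)\<^sup>2
    = \<psi> \<bullet> inner_samples ?k f - lam / n * (norm (inner_samples ?k f))\<^sup>2 - gam * (norm f)\<^sup>2" for f
    unfolding power2_norm_eq_inner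
    by (simp add: \<psi>_def ev inner_samples_def inner_vec_def sum_distrib_left power2_eq_square mult_ac)
  have "is_max_value (\<lambda>f. (1/n) * (\<Sum>i\<in>UNIV. c i * ev f (pts i))
              - lam * ((1/n) * (\<Sum>i\<in>UNIV. (ev f (pts i))\<^sup>2)) - gam * (norm f)\<^sup>2)
           (1 / (4 * gam) * (\<psi> \<bullet> ((Kn ** R) *v \<psi>)))"
    unfolding objective Kn R using lam gam by (intro penalized_quadratic_max) (simp_all add: n_def)
  moreover have "matrix_sqrt Kn ** R ** matrix_sqrt Kn = Kn ** R"
    unfolding R_def using lam gam
    by (intro matrix_sqrt_sandwich invertible_psd_scaled_plus_id) (simp_all add: Kn psd_gram_matrix n_def)
  ultimately show ?thesis by simp
qed

theorem mainTheorem8: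
  fixes evM :: "'hm::{real_inner,complete_space} \<Rightarrow> ('a \<times> 'w \<times> 'x) \<Rightarrow> real"
    and KM :: "('a \<times> 'w \<times> 'x) \<Rightarrow> ('a \<times> 'w \<times> 'x) \<Rightarrow> real"
    and evG :: "'hg::{real_inner,complete_space} \<Rightarrow> ('a \<times> 'z \<times> 'x) \<Rightarrow> real"
    and KG :: "('a \<times> 'z \<times> 'x) \<Rightarrow> ('a \<times> 'z \<times> 'x) \<Rightarrow> real"
    and lam_m gam_m lam_g gam_g :: real
    and A :: "'n::finite \<Rightarrow> 'a" and Z :: "'n \<Rightarrow> 'z" and W :: "'n \<Rightarrow> 'w"
    and X :: "'n \<Rightarrow> 'x" and Y :: "'n \<Rightarrow> real"
    and p :: "'a \<Rightarrow> 'w \<Rightarrow> 'x \<Rightarrow> real"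
    and q :: "'a \<Rightarrow> 'z \<Rightarrow> 'x \<Rightarrow> real"
    and h :: "'a \<Rightarrow> 'w \<Rightarrow> 'x \<Rightarrow> real"
  assumes "rkhs evM KM" and "rkhs evG KG"
    and "lam_m > 0" and "gam_m > 0" and "lam_g > 0" and "gam_g > 0"
  shows
   "let n = real CARD('n);
        \<Phi>q = (\<lambda>f. (1/n) * (\<Sum>i\<in>UNIV. (q (A i) (Z i) (X i) - 1 / p (A i) (W i) (X i))
                                 * evM f (A i, W i, X i)));
        \<Phi>h = (\<lambda>f. (1/n) * (\<Sum>i\<in>UNIV. (Y i - h (A i) (W i) (X i)) * evG f (A i, Z i, X i)));
        nM = (\<lambda>f. (1/n) * (\<Sum>i\<in>UNIV. (evM f (A i, W i, X i))\<^sup>2));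
        nG = (\<lambda>f. (1/n) * (\<Sum>i\<in>UNIV. (evG f (A i, Z i, X i))\<^sup>2));
        KMn = (\<chi> i j. KM (A i, W i, X i) (A j, W j, X j)) :: real^'n^'n;
        KGn = (\<chi> i j. KG (A i, Z i, X i) (A j, Z j, X j)) :: real^'n^'n;
        \<psi>q = (\<chi> i. (1/n) * (q (A i) (Z i) (X i) - 1 / p (A i) (W i) (X i))) :: real^'n;
        \<psi>h = (\<chi> i. (1/n) * (Y i - h (A i) (W i) (X i))) :: real^'n;
        RM = matrix_inv ((lam_m / gam_m * (1/n)) *\<^sub>R KMn + mat 1);
        RG = matrix_inv ((lam_g / gam_g * (1/n)) *\<^sub>R KGn + mat 1)
    in is_max_value (\<lambda>f. \<Phi>q f - lam_m * nM f - gam_m * (norm f)\<^sup>2)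
          (1 / (4 * gam_m) * (\<psi>q \<bullet> ((KMn ** RM) *v \<psi>q)))
     \<and> 1 / (4 * gam_m) * (\<psi>q \<bullet> ((KMn ** RM) *v \<psi>q))
         = 1 / (4 * gam_m) * (\<psi>q \<bullet> ((matrix_sqrt KMn ** RM ** matrix_sqrt KMn) *v \<psi>q))
     \<and> is_max_value (\<lambda>f. \<Phi>h f - lam_g * nG f - gam_g * (norm f)\<^sup>2)
          (1 / (4 * gam_g) * (\<psi>h \<bullet> ((KGn ** RG) *v \<psi>h)))
     \<and> 1 / (4 * gam_g) * (\<psi>h \<bullet> ((KGn ** RG) *v \<psi>h))
         = 1 / (4 * gam_g) * (\<psi>h \<bullet> ((matrix_sqrt KGn ** RG ** matrix_sqrt KGn) *v \<psi>h))"
proof -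
  note M = rkhs_penalized_empirical_max[OF assms(1) less_imp_le[OF assms(3)] assms(4), where pts = "\<lambda>i. (A i, W i, X i)"
             and c = "\<lambda>i. q (A i) (Z i) (X i) - 1 / p (A i) (W i) (X i)"]
  note G = rkhs_penalized_empirical_max[OF assms(2) less_imp_le[OF assms(5)] assms(6), where pts = "\<lambda>i. (A i, Z i, X i)"
             and c = "\<lambda>i. Y i - h (A i) (W i) (X i)"]
  show ?thesis unfolding Let_def using M G by simp
qed

end
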